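(* Let $n\ge 1$ and let $\mathcal F_{Acaa}(X_1,\dots,X_n)=\bigoplus_{k\ge1}\mathcal F^k_{Acaa}(X_1,\dots,X_n)$ be the free Acaa-algebra over a field $\mathbb K$ of characteristic $0$ on generators $X_1,\dots,X_n$, graded by degree in the generators. Then: $\mathcal F^1_{Acaa}$ is spanned by $X_1,\dots,X_n$; $\mathcal F^2_{Acaa}$ is spanned by the elements $[X_i,X_j]$ with $1\le i<j\le n$; $\mathcal F^3_{Acaa}$ is spanned by the elements $[X_i,[X_j,X_k]]$ with $1\le i<j<k\le n$; and $\mathcal F^k_{Acaa}(X_1,\dots,X_n)=0$ for all $k\ge 4$.
   Context: An Acaa-algebra over a field $\mathbb K$ of characteristic $0$ is a $\mathbb K$-vector space $A$ with a bilinear product $[\cdot,\cdot]$ which is anticommutative, $[x,y]=-[y,x]$, and satisfies $[x_1,[x_2,x_3]]=[x_2,[x_3,x_1]]$ for all $x_1,x_2,x_3\in A$. The free Acaa-algebra on $X_1,\dots,X_n$ is the quotient of the free nonassociative algebra on $X_1,\dots,X_n$ by the ideal generated by these identities; it is graded by the number of generators in a monomial, $\mathcal F^k_{Acaa}$ denoting the degree-$k$ homogeneous component. *)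

theory Defs
  imports "HOL-Library.Poly_Mapping"
begin

text \<open>Nonassociative monomials (binary bracketings) in generators indexed by nat;
  generator X_i is the leaf Leaf i.\<close>
datatype mono = Leaf nat | Node mono mono

fun leaves :: "mono \<Rightarrow> nat set" where
  "leaves (Leaf i) = {i}"
| "leaves (Node s t) = leaves s \<union> leaves t"

fun deg :: "mono \<Rightarrow> nat" where
  "deg (Leaf i) = 1"
| "deg (Node s t) = deg s + deg t"

text \<open>The free nonassociative algebra over 'k: finitely supported linear combinations
  of monomials, with the bilinear product extending Node.\<close>
type_synonym 'k nalg = "mono \<Rightarrow>\<^sub>0 'k"

definition gen :: "nat \<Rightarrow> 'k::field nalg" where
  "gen i = Poly_Mapping.single (Leaf i) 1"

definition smul :: "'k::field \<Rightarrow> 'k nalg \<Rightarrow> 'k nalg" where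
  "smul c p = Poly_Mapping.map (\<lambda>a. c * a) p"

definition mul :: "'k::field nalg \<Rightarrow> 'k nalg \<Rightarrow> 'k nalg" where
  "mul p q = (\<Sum>s\<in>Poly_Mapping.keys p. \<Sum>t\<in>Poly_Mapping.keys q.
      Poly_Mapping.single (Node s t) (Poly_Mapping.lookup p s * Poly_Mapping.lookup q t))"

definition FA :: "nat \<Rightarrow> 'k::field nalg set" where
  "FA n = {p. \<forall>t\<in>Poly_Mapping.keys p. leaves t \<subseteq> {1..n}}"

definition FAdeg :: "nat \<Rightarrow> nat \<Rightarrow> 'k::field nalg set" where
  "FAdeg n k = {p \<in> FA n. \<forall>t\<in>Poly_Mapping.keys p. deg t = k}"

inductive_set acaa_ideal :: "nat \<Rightarrow> 'k::field nalg set" for n where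
  anti: "x \<in> FA n \<Longrightarrow> y \<in> FA n \<Longrightarrow> mul x y + mul y x \<in> acaa_ideal n"
| cyc: "x1 \<in> FA n \<Longrightarrow> x2 \<in> FA n \<Longrightarrow> x3 \<in> FA n \<Longrightarrow>
          mul x1 (mul x2 x3) - mul x2 (mul x3 x1) \<in> acaa_ideal n"
| zero: "0 \<in> acaa_ideal n"
| add: "a \<in> acaa_ideal n \<Longrightarrow> b \<in> acaa_ideal n \<Longrightarrow> a + b \<in> acaa_ideal n"
| scal: "a \<in> acaa_ideal n \<Longrightarrow> smul c a \<in> acaa_ideal n"
| mulL: "a \<in> acaa_ideal n \<Longrightarrow> x \<in> FA n \<Longrightarrow> mul x a \<in> acaa_ideal n"
| mulR: "a \<in> acaa_ideal n \<Longrightarrow> x \<in> FA n \<Longrightarrow> mul a x \<in> acaa_ideal n"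

text \<open>Congruence modulo the ideal: equality in the free Acaa-algebra
  F_Acaa(X_1..X_n) = FA n / acaa_ideal n.\<close>
definition acaa_eq :: "nat \<Rightarrow> 'k::field nalg \<Rightarrow> 'k nalg \<Rightarrow> bool" where
  "acaa_eq n p q \<longleftrightarrow> p - q \<in> acaa_ideal n"

end

theory Submission
  imports Defs
begin

text \<open>Anticommutativity makes the triple product [x,[y,z]] skew in y and z, and together with
  the cyclic identity also skew in x and y; so it is alternating, and in characteristic 0 it
  vanishes as soon as two arguments coincide. Sorting generators therefore reduces degrees 2 and 3
  to brackets of strictly increasing generators. In degree at least 4 every monomial is, up to sign,
  a triple product with a product in one of its slots, and all of these vanish because
  [x,[y,[z,w]]] = 0.\<close>

lemma lookup_smul [simp]: "Poly_Mapping.lookup (smul c p) t = c * Poly_Mapping.lookup p t"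
  by (simp add: smul_def map.rep_eq when_def)

lemma lookup_mul_Node [simp]:
  "Poly_Mapping.lookup (mul p q) (Node s t) = Poly_Mapping.lookup p s * Poly_Mapping.lookup q t"
proof -
  have "Poly_Mapping.lookup (mul p q) (Node s t) =
     (\<Sum>s'\<in>Poly_Mapping.keys p. \<Sum>t'\<in>Poly_Mapping.keys q.
        (if s' = s \<and> t' = t then Poly_Mapping.lookup p s' * Poly_Mapping.lookup q t' else 0))"
    unfolding mul_def by (simp add: lookup_sum lookup_single when_def)
  also have "\<dots> = (\<Sum>s'\<in>Poly_Mapping.keys p.
        (if s' = s then Poly_Mapping.lookup p s' * Poly_Mapping.lookup q t else 0))"
    by (rule sum.cong) (auto simp: sum.delta' in_keys_iff)
  also have "\<dots> = Poly_Mapping.lookup p s * Poly_Mapping.lookup q t"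
    by (auto simp: sum.delta' in_keys_iff)
  finally show ?thesis .
qed

lemma lookup_mul_Leaf [simp]: "Poly_Mapping.lookup (mul p q) (Leaf i) = 0"
  unfolding mul_def by (simp add: lookup_sum lookup_single when_def)

lemma mul_diff_right: "mul c (a - b) = mul c a - mul c b"
  by (rule poly_mapping_eqI, case_tac k) (auto simp: lookup_minus algebra_simps)

lemma mul_uminus_right: "mul c (- a) = - mul c a"
  by (rule poly_mapping_eqI, case_tac k) auto

lemma mul_single:
  "mul (Poly_Mapping.single s a) (Poly_Mapping.single t b) = Poly_Mapping.single (Node s t) (a * b)"
  by (rule poly_mapping_eqI, case_tac k) (auto simp: lookup_single when_def)

lemma smul_add_left: "smul (c + d) a = smul c a + smul d a"
  by (rule poly_mapping_eqI) (simp add: lookup_add algebra_simps)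

lemma smul_diff: "smul c (a - b) = smul c a - smul c b"
  by (rule poly_mapping_eqI) (simp add: lookup_minus algebra_simps)

lemma smul_smul: "smul c (smul d a) = smul (c * d) a"
  by (rule poly_mapping_eqI) simp

lemma smul_minus_one: "smul (-1) a = - a"
  by (rule poly_mapping_eqI) simp

lemma smul_one [simp]: "smul 1 a = a"
  by (rule poly_mapping_eqI) simp

lemma smul_zero [simp]: "smul 0 a = 0" "smul c 0 = 0"
  by (rule poly_mapping_eqI, simp)+

lemma smul_single: "smul c (Poly_Mapping.single t a) = Poly_Mapping.single t (c * a)"
  by (rule poly_mapping_eqI) (simp add: lookup_single when_def)

lemma smul_sum: "smul c (sum f S) = (\<Sum>x\<in>S. smul c (f x))"
  by (rule poly_mapping_eqI) (simp add: lookup_sum sum_distrib_left)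

lemma smul_half_double: "smul (1/2) (a + a) = (a :: 'k::field_char_0 nalg)"
  by (rule poly_mapping_eqI) (simp add: lookup_add)

lemma FA_iff: "p \<in> FA n \<longleftrightarrow> (\<forall>t. Poly_Mapping.lookup p t \<noteq> 0 \<longrightarrow> leaves t \<subseteq> {1..n})"
  by (auto simp: FA_def in_keys_iff)

lemma FA_mul [intro]:
  assumes "a \<in> FA n" and "b \<in> FA n"
  shows "mul a b \<in> FA n"
  unfolding FA_iff
proof (intro allI impI)
  fix t assume "Poly_Mapping.lookup (mul a b) t \<noteq> 0"
  with assms show "leaves t \<subseteq> {1..n}" by (cases t) (auto simp: FA_iff)
qed

lemma FA_gen [intro]: "i \<in> {1..n} \<Longrightarrow> gen i \<in> FA n"
  by (auto simp: FA_iff gen_def lookup_single when_def)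

lemma FAdeg_keys:
  "p \<in> FAdeg n k \<Longrightarrow> t \<in> Poly_Mapping.keys p \<Longrightarrow> leaves t \<subseteq> {1..n} \<and> deg t = k"
  by (auto simp: FAdeg_def FA_def)

fun mon :: "mono \<Rightarrow> 'k::field nalg" where
  "mon (Leaf i) = gen i"
| "mon (Node s t) = mul (mon s) (mon t)"

lemma mon_eq_single: "mon t = Poly_Mapping.single t 1"
  by (induction t) (auto simp: gen_def mul_single)

lemma FA_mon [intro]: "leaves t \<subseteq> {1..n} \<Longrightarrow> mon t \<in> FA n"
  by (induction t) auto

lemma sum_keys_smul_mon: "(\<Sum>t\<in>Poly_Mapping.keys p. smul (Poly_Mapping.lookup p t) (mon t)) = p"
  by (rule poly_mapping_eqI)
    (auto simp: mon_eq_single smul_single lookup_sum lookup_single when_def sum.delta in_keys_iff)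

lemma poly_mapping_mon_induct:
  assumes "P 0" "\<And>a b. P a \<Longrightarrow> P b \<Longrightarrow> P (a + b)" "\<And>c a. P a \<Longrightarrow> P (smul c a)"
    and "\<And>t. t \<in> Poly_Mapping.keys p \<Longrightarrow> P (mon t)"
  shows "P p"
proof -
  have "P (\<Sum>t\<in>S. smul (Poly_Mapping.lookup p t) (mon t))" if "S \<subseteq> Poly_Mapping.keys p" for S
  proof -
    have "finite S" using finite_keys that by (rule rev_finite_subset)
    then show ?thesis using that by induction (auto intro: assms)
  qed
  from this[OF subset_refl] show ?thesis by (simp add: sum_keys_smul_mon)
qed

lemma deg_ge_1: "deg t \<ge> 1"
  by (induction t) auto

lemma deg_eq_1_iff: "deg t = 1 \<longleftrightarrow> (\<exists>i. t = Leaf i)"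
proof (cases t)
  case (Node s u)
  with deg_ge_1[of s] deg_ge_1[of u] show ?thesis by auto
qed auto

lemma deg_eq_2_iff: "deg t = 2 \<longleftrightarrow> (\<exists>i j. t = Node (Leaf i) (Leaf j))"
proof (cases t)
  case (Node s u)
  with deg_ge_1[of s] deg_ge_1[of u] have "deg t = 2 \<longleftrightarrow> deg s = 1 \<and> deg u = 1" by auto
  with Node show ?thesis by (simp only: deg_eq_1_iff) auto
qed auto

lemma deg_eq_3_iff:
  "deg t = 3 \<longleftrightarrow> (\<exists>i j k. t = Node (Leaf i) (Node (Leaf j) (Leaf k))
                          \<or> t = Node (Node (Leaf i) (Leaf j)) (Leaf k))"
proof (cases t)
  case (Node s u)
  with deg_ge_1[of s] deg_ge_1[of u] have "deg t = 3 \<longleftrightarrow>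
      deg s = 1 \<and> deg u = 2 \<or> deg s = 2 \<and> deg u = 1" by auto
  with Node show ?thesis by (simp only: deg_eq_1_iff deg_eq_2_iff) auto
qed auto

lemma acaa_ideal_uminus: "a \<in> acaa_ideal n \<Longrightarrow> - a \<in> acaa_ideal n"
  using acaa_ideal.scal[of a n "-1"] by (simp add: smul_minus_one)

lemma acaa_eq_refl [intro]: "acaa_eq n a a"
  by (simp add: acaa_eq_def acaa_ideal.zero)

lemma acaa_eq_sym: "acaa_eq n a b \<Longrightarrow> acaa_eq n b a"
  unfolding acaa_eq_def using acaa_ideal_uminus[of "a - b" n] by simp

lemma acaa_eq_trans [trans]: "acaa_eq n a b \<Longrightarrow> acaa_eq n b c \<Longrightarrow> acaa_eq n a c"
  unfolding acaa_eq_def using acaa_ideal.add[of "a - b" n "b - c"] by simp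

lemma acaa_eq_add: "acaa_eq n a b \<Longrightarrow> acaa_eq n c d \<Longrightarrow> acaa_eq n (a + c) (b + d)"
  unfolding acaa_eq_def using acaa_ideal.add[of "a - b" n "c - d"] by (simp add: algebra_simps)

lemma acaa_eq_smul: "acaa_eq n a b \<Longrightarrow> acaa_eq n (smul c a) (smul c b)"
  unfolding acaa_eq_def using acaa_ideal.scal[of "a - b" n c] by (simp add: smul_diff)

lemma acaa_eq_uminus: "acaa_eq n a b \<Longrightarrow> acaa_eq n (- a) (- b)"
  unfolding acaa_eq_def using acaa_ideal_uminus[of "a - b" n] by simp

lemma acaa_eq_mul_left: "acaa_eq n a b \<Longrightarrow> x \<in> FA n \<Longrightarrow> acaa_eq n (mul x a) (mul x b)"
  unfolding acaa_eq_def using acaa_ideal.mulL[of "a - b" n x] by (simp add: mul_diff_right)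

lemma acaa_eq_mul_left_uminus:
  "acaa_eq n a (- b) \<Longrightarrow> x \<in> FA n \<Longrightarrow> acaa_eq n (mul x a) (- mul x b)"
  using acaa_eq_mul_left[of n a "- b" x] by (simp add: mul_uminus_right)

lemma acaa_eq_zero_if_eq_uminus:
  "acaa_eq n a (- a) \<Longrightarrow> acaa_eq n (a :: 'k::field_char_0 nalg) 0"
  unfolding acaa_eq_def using acaa_ideal.scal[of "a + a" n "1/2"] by (simp add: smul_half_double)

lemma acaa_eq_zero_if_eq_uminus_zero:
  "acaa_eq n a (- b) \<Longrightarrow> acaa_eq n b 0 \<Longrightarrow> acaa_eq n a 0"
  using acaa_eq_trans[of n a "- b" 0] acaa_eq_uminus[of n b 0] by simp

subsection \<open>Identities of the triple product\<close>

lemma acaa_eq_anticomm: "x \<in> FA n \<Longrightarrow> y \<in> FA n \<Longrightarrow> acaa_eq n (mul x y) (- mul y x)"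
  unfolding acaa_eq_def using acaa_ideal.anti[of x n y] by simp

lemma acaa_eq_cyclic:
  "x \<in> FA n \<Longrightarrow> y \<in> FA n \<Longrightarrow> z \<in> FA n \<Longrightarrow> acaa_eq n (mul x (mul y z)) (mul y (mul z x))"
  unfolding acaa_eq_def using acaa_ideal.cyc by blast

lemma acaa_eq_mul_self: "x \<in> FA n \<Longrightarrow> acaa_eq n (mul x x) (0 :: 'k::field_char_0 nalg)"
  by (intro acaa_eq_zero_if_eq_uminus acaa_eq_anticomm)

lemma triple_swap23:
  "x \<in> FA n \<Longrightarrow> y \<in> FA n \<Longrightarrow> z \<in> FA n \<Longrightarrow> acaa_eq n (mul x (mul y z)) (- mul x (mul z y))"
  by (intro acaa_eq_mul_left_uminus acaa_eq_anticomm)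

lemma triple_swap12:
  assumes "x \<in> FA n" "y \<in> FA n" "z \<in> FA n"
  shows "acaa_eq n (mul x (mul y z)) (- mul y (mul x z))"
proof -
  have "acaa_eq n (mul x (mul y z)) (- mul x (mul z y))" using assms by (rule triple_swap23)
  also have "acaa_eq n \<dots> (- mul z (mul y x))" using assms by (intro acaa_eq_uminus acaa_eq_cyclic)
  also have "acaa_eq n \<dots> (- mul y (mul x z))" using assms by (intro acaa_eq_uminus acaa_eq_cyclic)
  finally show ?thesis .
qed

text \<open>Write Q(x,y,z,w) for [x,[y,[z,w]]]. It is alternating in x,y and in z,w, and invariant
  under cycling y,z,w (cyclic identity inside); hence it is alternating in all four arguments and
  Q(x,y,z,w) = Q(z,w,x,y). On the other hand the cyclic identity and anticommutativity give
  Q(x,y,z,w) = [[z,w],[x,y]] = -[[x,y],[z,w]] = -Q(z,w,x,y).\<close>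

lemma triple_right_product_zero:
  assumes "x \<in> FA n" "y \<in> FA n" "z \<in> FA n" "w \<in> FA n"
  shows "acaa_eq n (mul x (mul y (mul z w))) (0 :: 'k::field_char_0 nalg)"
proof (rule acaa_eq_zero_if_eq_uminus)
  have zw: "mul z w \<in> FA n" and xy: "mul x y \<in> FA n" using assms by auto
  have "acaa_eq n (mul x (mul y (mul z w))) (mul (mul z w) (mul x y))"
    using assms zw by (intro acaa_eq_sym[OF acaa_eq_cyclic])
  also have "acaa_eq n \<dots> (- mul (mul x y) (mul z w))"
    using zw xy by (rule acaa_eq_anticomm)
  also have "acaa_eq n \<dots> (- mul z (mul w (mul x y)))"
    using assms xy by (intro acaa_eq_uminus acaa_eq_cyclic)
  also have "acaa_eq n \<dots> (- mul z (mul x (mul y w)))"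
    using assms by (intro acaa_eq_uminus acaa_eq_mul_left acaa_eq_cyclic)
  also have "acaa_eq n \<dots> (- (- mul x (mul z (mul y w))))"
    using assms by (intro acaa_eq_uminus triple_swap12) auto
  also have "acaa_eq n \<dots> (- (- mul x (mul y (mul w z))))"
    using assms by (intro acaa_eq_uminus acaa_eq_mul_left acaa_eq_cyclic)
  also have "acaa_eq n \<dots> (- (- (- mul x (mul y (mul z w)))))"
    using assms by (intro acaa_eq_uminus acaa_eq_mul_left_uminus triple_swap23)
  finally show "acaa_eq n (mul x (mul y (mul z w))) (- mul x (mul y (mul z w)))" by simp
qed

lemma triple_middle_product_zero:
  assumes "x \<in> FA n" "y \<in> FA n" "z \<in> FA n" "w \<in> FA n"
  shows "acaa_eq n (mul x (mul (mul y z) w)) (0 :: 'k::field_char_0 nalg)"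
  using assms by (intro acaa_eq_zero_if_eq_uminus_zero[OF triple_swap23 triple_right_product_zero]) auto

lemma triple_left_product_zero:
  assumes "x \<in> FA n" "y \<in> FA n" "z \<in> FA n" "w \<in> FA n"
  shows "acaa_eq n (mul (mul x y) (mul z w)) (0 :: 'k::field_char_0 nalg)"
proof -
  have "acaa_eq n (mul (mul x y) (mul z w)) (mul z (mul w (mul x y)))"
    using assms by (intro acaa_eq_cyclic) auto
  also have "acaa_eq n \<dots> 0" using assms by (intro triple_right_product_zero)
  finally show ?thesis .
qed

subsection \<open>Vanishing in degree at least four\<close>

lemma mon_Node_Node_zero:
  assumes "leaves s \<union> leaves a \<union> leaves b \<subseteq> {1..n}" and "deg s + deg a + deg b \<ge> 4"
  shows "acaa_eq n (mon (Node s (Node a b))) (0 :: 'k::field_char_0 nalg)"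
proof -
  from assms(2) deg_ge_1[of s] deg_ge_1[of a] deg_ge_1[of b]
  consider "deg s \<ge> 2" | "deg a \<ge> 2" | "deg b \<ge> 2" by linarith
  then show ?thesis
  proof cases
    case 1
    then obtain c d where "s = Node c d" by (cases s) auto
    with assms(1) show ?thesis by (simp add: triple_left_product_zero FA_mon)
  next
    case 2
    then obtain c d where "a = Node c d" by (cases a) auto
    with assms(1) show ?thesis by (simp add: triple_middle_product_zero FA_mon)
  next
    case 3
    then obtain c d where "b = Node c d" by (cases b) auto
    with assms(1) show ?thesis by (simp add: triple_right_product_zero FA_mon)
  qed
qed

lemma mon_zero_if_deg_ge_4:
  assumes "leaves t \<subseteq> {1..n}" and "deg t \<ge> 4"
  shows "acaa_eq n (mon t) (0 :: 'k::field_char_0 nalg)"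
proof (cases t)
  case t: (Node s u)
  show ?thesis
  proof (cases u)
    case (Leaf i)
    with t assms obtain a b where s: "s = Node a b" by (cases s) auto
    have "acaa_eq n (mon (Node u s)) (0 :: 'k nalg)"
      using assms t Leaf unfolding s by (intro mon_Node_Node_zero) auto
    moreover have "mon s \<in> FA n" "mon u \<in> FA n" using assms(1) t by (simp_all add: FA_mon)
    then have "acaa_eq n (mon t) (- mon (Node u s))" unfolding t mon.simps by (rule acaa_eq_anticomm)
    ultimately show ?thesis by (rule acaa_eq_zero_if_eq_uminus_zero[rotated])
  next
    case (Node a b)
    show ?thesis unfolding t Node by (rule mon_Node_Node_zero) (use assms t Node in auto)
  qed
qed (use assms in simp)

lemma FAdeg_zero_if_ge_4:
  assumes "k \<ge> 4" and "p \<in> (FAdeg n k :: 'k::field_char_0 nalg set)"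
  shows "acaa_eq n p 0"
proof (induction p rule: poly_mapping_mon_induct)
  case (3 c a)
  then show ?case using acaa_eq_smul[of n a 0 c] by simp
next
  case (4 t)
  then have "leaves t \<subseteq> {1..n}" "deg t = k" using FAdeg_keys[OF assms(2)] by blast+
  with assms(1) show ?case by (intro mon_zero_if_deg_ge_4) simp_all
qed (use acaa_eq_add in fastforce)+

subsection \<open>Spanning sets modulo the Acaa ideal\<close>

definition acaa_span :: "nat \<Rightarrow> 'a set \<Rightarrow> ('a \<Rightarrow> 'k::field nalg) \<Rightarrow> 'k nalg set" where
  "acaa_span n S B = {p. \<exists>c. acaa_eq n p (\<Sum>x\<in>S. smul (c x) (B x))}"

lemma acaa_span_add:
  assumes "p \<in> acaa_span n S B" and "q \<in> acaa_span n S B"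
  shows "p + q \<in> acaa_span n S B"
proof -
  from assms obtain c d where "acaa_eq n p (\<Sum>x\<in>S. smul (c x) (B x))"
    and "acaa_eq n q (\<Sum>x\<in>S. smul (d x) (B x))" by (auto simp: acaa_span_def)
  then have "acaa_eq n (p + q) (\<Sum>x\<in>S. smul (c x + d x) (B x))"
    by (simp add: acaa_eq_add smul_add_left sum.distrib)
  then show ?thesis by (auto simp: acaa_span_def)
qed

lemma acaa_span_smul:
  assumes "p \<in> acaa_span n S B"
  shows "smul r p \<in> acaa_span n S B"
proof -
  from assms obtain c where "acaa_eq n p (\<Sum>x\<in>S. smul (c x) (B x))"
    by (auto simp: acaa_span_def)
  then have "acaa_eq n (smul r p) (\<Sum>x\<in>S. smul (r * c x) (B x))"
    using acaa_eq_smul by (fastforce simp: smul_sum smul_smul)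
  then show ?thesis by (auto simp: acaa_span_def)
qed

lemma acaa_span_uminus: "p \<in> acaa_span n S B \<Longrightarrow> - p \<in> acaa_span n S B"
  using acaa_span_smul[of p n S B "-1"] by (simp add: smul_minus_one)

lemma acaa_span_cong: "acaa_eq n p q \<Longrightarrow> q \<in> acaa_span n S B \<Longrightarrow> p \<in> acaa_span n S B"
  by (auto simp: acaa_span_def intro: acaa_eq_trans)

lemma acaa_span_if_eq_zero: "acaa_eq n p 0 \<Longrightarrow> p \<in> acaa_span n S B"
  by (auto simp: acaa_span_def intro!: exI[of _ "\<lambda>_. 0"])

lemma acaa_span_generator: "finite S \<Longrightarrow> x \<in> S \<Longrightarrow> B x \<in> acaa_span n S B"
  unfolding acaa_span_def
  by (auto intro!: exI[of _ "\<lambda>y. if y = x then 1 else 0"]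
      simp: if_distrib[of "\<lambda>c. smul c _"] sum.delta' cong: if_cong)

lemma acaa_span_if_mon_keys:
  "(\<And>t. t \<in> Poly_Mapping.keys p \<Longrightarrow> mon t \<in> acaa_span n S B) \<Longrightarrow> p \<in> acaa_span n S B"
  by (rule poly_mapping_mon_induct)
    (auto intro: acaa_span_add acaa_span_smul acaa_span_if_eq_zero)

lemma acaa_span_curry_pairs:
  assumes "p \<in> acaa_span n S (\<lambda>(i, j). B i j)"
  shows "\<exists>c. acaa_eq n p (\<Sum>(i, j)\<in>S. smul (c i j) (B i j))"
proof -
  from assms obtain c where "acaa_eq n p (\<Sum>x\<in>S. smul (c x) (case x of (i, j) \<Rightarrow> B i j))"
    by (auto simp: acaa_span_def)
  then have "acaa_eq n p (\<Sum>(i, j)\<in>S. smul (curry c i j) (B i j))"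
    by (simp add: case_prod_unfold)
  then show ?thesis by (rule exI[of _ "curry c"])
qed

lemma acaa_span_curry_triples:
  assumes "p \<in> acaa_span n S (\<lambda>(i, j, k). B i j k)"
  shows "\<exists>c. acaa_eq n p (\<Sum>(i, j, k)\<in>S. smul (c i j k) (B i j k))"
proof -
  from assms obtain c where "acaa_eq n p (\<Sum>x\<in>S. smul (c x) (case x of (i, j, k) \<Rightarrow> B i j k))"
    by (auto simp: acaa_span_def)
  then have "acaa_eq n p (\<Sum>(i, j, k)\<in>S. smul (c (i, j, k)) (B i j k))"
    by (simp add: case_prod_unfold)
  then show ?thesis by (rule exI[of _ "\<lambda>i j k. c (i, j, k)"])
qed

lemma FAdeg_1_span:
  assumes "p \<in> FAdeg n 1"
  shows "p \<in> acaa_span n {1..n} gen"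
proof (rule acaa_span_if_mon_keys)
  fix t assume "t \<in> Poly_Mapping.keys p"
  with assms have "leaves t \<subseteq> {1..n}" and "deg t = 1" using FAdeg_keys by blast+
  then obtain i where "t = Leaf i" "i \<in> {1..n}" using deg_eq_1_iff by fastforce
  then show "mon t \<in> acaa_span n {1..n} gen" by (simp add: acaa_span_generator)
qed

definition increasing_pairs :: "nat \<Rightarrow> (nat \<times> nat) set" where
  "increasing_pairs n = {(i, j). 1 \<le> i \<and> i < j \<and> j \<le> n}"

abbreviation pair_span :: "nat \<Rightarrow> 'k::field nalg set" where
  "pair_span n \<equiv> acaa_span n (increasing_pairs n) (\<lambda>(i, j). mul (gen i) (gen j))"

lemma finite_increasing_pairs: "finite (increasing_pairs n)"
  by (rule finite_subset[of _ "{1..n} \<times> {1..n}"]) (auto simp: increasing_pairs_def)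

lemma mul_gen_gen_span:
  assumes "i \<in> {1..n}" and "j \<in> {1..n}"
  shows "(mul (gen i) (gen j) :: 'k::field_char_0 nalg) \<in> pair_span n"
    (is "_ \<in> ?V")
proof -
  have gen_ij: "gen i \<in> FA n" "gen j \<in> FA n" using assms by auto
  have generator: "mul (gen a) (gen b) \<in> ?V" if "a < b" "a \<in> {1..n}" "b \<in> {1..n}" for a b
    using acaa_span_generator[OF finite_increasing_pairs,
        where x = "(a, b)" and B = "\<lambda>(i, j). mul (gen i) (gen j)"] that
    by (simp add: increasing_pairs_def)
  consider "i < j" | "i = j" | "j < i" by linarith
  then show ?thesis
  proof cases
    case 1
    with assms show ?thesis by (intro generator)
  next
    case 2
    show ?thesis unfolding 2 using gen_ij(2) by (intro acaa_span_if_eq_zero acaa_eq_mul_self)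
  next
    case 3
    with assms have "- mul (gen j) (gen i) \<in> ?V" by (intro acaa_span_uminus generator)
    with gen_ij show ?thesis by (rule acaa_span_cong[OF acaa_eq_anticomm])
  qed
qed

lemma FAdeg_2_span:
  assumes "p \<in> (FAdeg n 2 :: 'k::field_char_0 nalg set)"
  shows "p \<in> pair_span n"
proof (rule acaa_span_if_mon_keys)
  fix t assume "t \<in> Poly_Mapping.keys p"
  with assms have "leaves t \<subseteq> {1..n}" and "deg t = 2" using FAdeg_keys by blast+
  then obtain i j where "t = Node (Leaf i) (Leaf j)" "i \<in> {1..n}" "j \<in> {1..n}"
    using deg_eq_2_iff by fastforce
  then show "mon t \<in> (pair_span n :: 'k nalg set)"
    by (simp add: mul_gen_gen_span)
qed

definition increasing_triples :: "nat \<Rightarrow> (nat \<times> nat \<times> nat) set" where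
  "increasing_triples n = {(i, j, k). 1 \<le> i \<and> i < j \<and> j < k \<and> k \<le> n}"

lemma finite_increasing_triples: "finite (increasing_triples n)"
  by (rule finite_subset[of _ "{1..n} \<times> {1..n} \<times> {1..n}"]) (auto simp: increasing_triples_def)

abbreviation gen_triple :: "nat \<Rightarrow> nat \<Rightarrow> nat \<Rightarrow> 'k::field nalg" where
  "gen_triple i j k \<equiv> mul (gen i) (mul (gen j) (gen k))"

abbreviation triple_span :: "nat \<Rightarrow> 'k::field nalg set" where
  "triple_span n \<equiv> acaa_span n (increasing_triples n) (\<lambda>(i, j, k). gen_triple i j k)"

lemma gen_triple_span_increasing_tail:
  assumes "i \<in> {1..n}" "j \<in> {1..n}" "k \<in> {1..n}" and "j < k"
  shows "(gen_triple i j k :: 'k::field_char_0 nalg) \<in> triple_span n"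
    (is "_ \<in> ?V")
proof -
  have gen_ijk: "gen i \<in> FA n" "gen j \<in> FA n" "gen k \<in> FA n" using assms by auto
  have generator: "gen_triple a b c \<in> ?V"
    if "a < b" "b < c" "a \<in> {1..n}" "c \<in> {1..n}" for a b c
    using acaa_span_generator[OF finite_increasing_triples,
        where x = "(a, b, c)" and B = "\<lambda>(i, j, k). gen_triple i j k"] that
    by (simp add: increasing_triples_def)
  consider "i < j" | "i = j" | "j < i" "i < k" | "i = k" | "k < i" by linarith
  then show ?thesis
  proof cases
    case 1
    with assms show ?thesis by (intro generator)
  next
    case 2
    have "acaa_eq n (gen_triple j j k) (0 :: 'k nalg)"
      using gen_ijk by (intro acaa_eq_zero_if_eq_uminus triple_swap12)
    with 2 show ?thesis by (simp add: acaa_span_if_eq_zero)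
  next
    case 3
    with assms have "- gen_triple j i k \<in> ?V" by (intro acaa_span_uminus generator)
    with gen_ijk show ?thesis by (rule acaa_span_cong[OF triple_swap12])
  next
    case 4
    have "acaa_eq n (gen_triple k j k) (gen_triple j k k :: 'k nalg)"
      using gen_ijk by (intro acaa_eq_cyclic)
    also have "acaa_eq n \<dots> 0" using gen_ijk by (intro acaa_eq_zero_if_eq_uminus triple_swap23)
    finally show ?thesis using 4 by (simp add: acaa_span_if_eq_zero)
  next
    case 5
    with assms have "gen_triple j k i \<in> ?V" by (intro generator)
    with gen_ijk show ?thesis by (rule acaa_span_cong[OF acaa_eq_cyclic])
  qed
qed

lemma gen_triple_span:
  assumes "i \<in> {1..n}" "j \<in> {1..n}" "k \<in> {1..n}"
  shows "(gen_triple i j k :: 'k::field_char_0 nalg) \<in> triple_span n"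
proof -
  have gen_ijk: "gen i \<in> FA n" "gen j \<in> FA n" "gen k \<in> FA n" using assms by auto
  consider "j < k" | "j = k" | "k < j" by linarith
  then show ?thesis
  proof cases
    case 1
    with assms show ?thesis by (rule gen_triple_span_increasing_tail)
  next
    case 2
    have "acaa_eq n (gen_triple i k k) (0 :: 'k nalg)"
      using gen_ijk by (intro acaa_eq_zero_if_eq_uminus triple_swap23)
    with 2 show ?thesis by (simp add: acaa_span_if_eq_zero)
  next
    case 3
    with assms have "- gen_triple i k j \<in> (triple_span n :: 'k nalg set)"
      by (intro acaa_span_uminus gen_triple_span_increasing_tail)
    with gen_ijk show ?thesis by (rule acaa_span_cong[OF triple_swap23])
  qed
qed

lemma FAdeg_3_span:
  assumes "p \<in> (FAdeg n 3 :: 'k::field_char_0 nalg set)"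
  shows "p \<in> triple_span n"
proof (rule acaa_span_if_mon_keys)
  fix t assume "t \<in> Poly_Mapping.keys p"
  with assms have "leaves t \<subseteq> {1..n}" and "deg t = 3" using FAdeg_keys by blast+
  then obtain i j k where range: "i \<in> {1..n}" "j \<in> {1..n}" "k \<in> {1..n}"
    and "t = Node (Leaf i) (Node (Leaf j) (Leaf k)) \<or> t = Node (Node (Leaf i) (Leaf j)) (Leaf k)"
    using deg_eq_3_iff by fastforce
  then consider "(mon t :: 'k nalg) = gen_triple i j k"
    | "(mon t :: 'k nalg) = mul (mul (gen i) (gen j)) (gen k)"
    by auto
  then show "mon t \<in> (triple_span n :: 'k nalg set)"
  proof cases
    case 1
    with range show ?thesis by (simp add: gen_triple_span)
  next
    case 2
    have "acaa_eq n (mon t) (- gen_triple k i j :: 'k nalg)"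
      unfolding 2 using range by (intro acaa_eq_anticomm FA_mul FA_gen)
    moreover have "- gen_triple k i j \<in> (triple_span n :: 'k nalg set)"
      using range by (intro acaa_span_uminus gen_triple_span)
    ultimately show ?thesis by (rule acaa_span_cong)
  qed
qed

theorem mainTheorem6:
  fixes n :: nat
  assumes "n \<ge> 1"
  shows "(\<forall>p \<in> (FAdeg n 1 :: 'k::field_char_0 nalg set).
            \<exists>c. acaa_eq n p (\<Sum>i\<in>{1..n}. smul (c i) (gen i)))
       \<and> (\<forall>p \<in> (FAdeg n 2 :: 'k nalg set).
            \<exists>c. acaa_eq n p (\<Sum>(i,j)\<in>{(i,j). 1 \<le> i \<and> i < j \<and> j \<le> n}.
                   smul (c i j) (mul (gen i) (gen j))))
       \<and> (\<forall>p \<in> (FAdeg n 3 :: 'k nalg set).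
            \<exists>c. acaa_eq n p (\<Sum>(i,j,k)\<in>{(i,j,k). 1 \<le> i \<and> i < j \<and> j < k \<and> k \<le> n}.
                   smul (c i j k) (mul (gen i) (mul (gen j) (gen k)))))
       \<and> (\<forall>k \<ge> 4. \<forall>p \<in> (FAdeg n k :: 'k nalg set). acaa_eq n p 0)"
proof (intro conjI ballI allI impI)
  fix p :: "'k nalg"
  assume "p \<in> FAdeg n 1"
  then show "\<exists>c. acaa_eq n p (\<Sum>i\<in>{1..n}. smul (c i) (gen i))"
    using FAdeg_1_span by (auto simp: acaa_span_def)
next
  fix p :: "'k nalg"
  assume "p \<in> FAdeg n 2"
  then show "\<exists>c. acaa_eq n p (\<Sum>(i,j)\<in>{(i,j). 1 \<le> i \<and> i < j \<and> j \<le> n}.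
                   smul (c i j) (mul (gen i) (gen j)))"
    unfolding increasing_pairs_def[symmetric] by (intro acaa_span_curry_pairs FAdeg_2_span)
next
  fix p :: "'k nalg"
  assume "p \<in> FAdeg n 3"
  then show "\<exists>c. acaa_eq n p (\<Sum>(i,j,k)\<in>{(i,j,k). 1 \<le> i \<and> i < j \<and> j < k \<and> k \<le> n}.
                   smul (c i j k) (mul (gen i) (mul (gen j) (gen k))))"
    unfolding increasing_triples_def[symmetric] by (intro acaa_span_curry_triples FAdeg_3_span)
qed (rule FAdeg_zero_if_ge_4)

end
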